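(* Consider the noisy Hegselmann–Krause model with heterogeneously prejudiced agents described in the context, with noise bound $\delta>0$, and suppose $J_1-J_2>\epsilon+2\,\frac{(1-\alpha)\epsilon+\delta}{\alpha}$. Then for every initial condition $x(0)\in[0,1]^n$, almost surely $$\limsup_{t\to\infty}\max_{i\in\mathcal{S}_1}|x_i(t)-J_1|\le\frac{\delta}{\alpha}\quad\text{and}\quad\limsup_{t\to\infty}\max_{i\in\mathcal{S}_2}|x_i(t)-J_2|\le\frac{\delta}{\alpha}.$$
   Context: Agents $\mathcal{V}=\{1,\dots,n\}$ with opinions $x_i(t)\in[0,1]$, $t=0,1,2,\dots$. $\mathcal{V}=\mathcal{S}_1\cup\mathcal{S}_2$ with $\mathcal{S}_1\cap\mathcal{S}_2=\emptyset$; agents in $\mathcal{S}_k$ have prejudice value $J_k\in[0,1]$ ($k=1,2$). Confidence bound $\epsilon\in(0,1)$, attraction strength $\alpha\in(0,1]$. Neighbor set $\mathcal{N}_i(x(t))=\{j\in\mathcal{V}:|x_j(t)-x_i(t)|\le\epsilon\}$. For $i\in\mathcal{S}_k$, $x_i^*(t)=(1-\alpha)|\mathcal{N}_i(x(t))|^{-1}\sum_{j\in\mathcal{N}_i(x(t))}x_j(t)+\alpha J_k+\xi_i(t+1)$, and $x_i(t+1)$ equals $1$ if $x_i^*(t)>1$, $x_i^*(t)$ if $x_i^*(t)\in[0,1]$, $0$ if $x_i^*(t)<0$. The noises $\{\xi_i(t)\}_{i\in\mathcal{V},t\ge1}$ are i.i.d. with $E\xi_1(1)=0$, $E\xi_1(1)^2>0$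 and $|\xi_1(1)|\le\delta$ almost surely. *)

theory Defs
  imports "HOL-Probability.Probability"
begin

definition clip01 :: "real \<Rightarrow> real" where
  "clip01 y = (if y > 1 then 1 else if y < 0 then 0 else y)"

definition hk_neighbors :: "nat set \<Rightarrow> real \<Rightarrow> (nat \<Rightarrow> real) \<Rightarrow> nat \<Rightarrow> nat set" where
  "hk_neighbors V eps x i = {j \<in> V. \<bar>x j - x i\<bar> \<le> eps}"

definition hk_avg :: "nat set \<Rightarrow> real \<Rightarrow> (nat \<Rightarrow> real) \<Rightarrow> nat \<Rightarrow> real" where
  "hk_avg V eps x i = (\<Sum>j\<in>hk_neighbors V eps x i. x j) / real (card (hk_neighbors V eps x i))"

text \<open>Trajectory: hk_traj V J eps alpha x0 xi t i = x_i(t), where J i is the prejudice of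
  agent i and xi i t is the noise xi_i(t) (used for t >= 1).\<close>
primrec hk_traj :: "nat set \<Rightarrow> (nat \<Rightarrow> real) \<Rightarrow> real \<Rightarrow> real \<Rightarrow> (nat \<Rightarrow> real)
    \<Rightarrow> (nat \<Rightarrow> nat \<Rightarrow> real) \<Rightarrow> nat \<Rightarrow> nat \<Rightarrow> real" where
  "hk_traj V J eps alpha x0 xi 0 = x0"
| "hk_traj V J eps alpha x0 xi (Suc t) =
     (\<lambda>i. clip01 ((1 - alpha) * hk_avg V eps (hk_traj V J eps alpha x0 xi t) i
                   + alpha * J i + xi i (Suc t)))"

end

theory Submission
  imports Defs
begin

text \<open>Every agent moves towards its prejudice at rate \<open>\<alpha>\<close> while its neighbour average drifts it by at
  most \<open>\<epsilon>\<close> and the noise by at most \<open>\<delta>\<close>. Hence after a transient of order \<open>(1 - \<alpha>)\<^sup>t\<close> the agents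
  of \<open>S\<^sub>1\<close> stay above \<open>J\<^sub>1 - b\<close> and those of \<open>S\<^sub>2\<close> below \<open>J\<^sub>2 + b\<close>, with \<open>b = ((1 - \<alpha>)\<epsilon> + \<delta>)/\<alpha>\<close>.
  The gap assumption makes the two groups more than \<open>\<epsilon>\<close> apart from then on, so they no longer
  interact, and within each group the distance to the common prejudice contracts by the factor
  \<open>1 - \<alpha>\<close> up to the noise, which leaves a limsup of at most \<open>\<delta>/\<alpha>\<close>. The noise bound holds almost
  surely for all countably many noise variables at once, so the deterministic argument applies
  to almost every sample path.\<close>

lemma clip01_in_01: "clip01 y \<in> {0..1}"
  by (simp add: clip01_def)

lemma clip01_ge: "a \<le> 1 \<Longrightarrow> a \<le> y \<Longrightarrow> a \<le> clip01 y"
  by (simp add: clip01_def)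

lemma clip01_reflect: "clip01 (1 - y) = 1 - clip01 y"
  by (simp add: clip01_def)

lemma clip01_dist_le: "J \<in> {0..1} \<Longrightarrow> \<bar>clip01 y - J\<bar> \<le> \<bar>y - J\<bar>"
  by (simp add: clip01_def)

lemma clip01_update_dist_le:
  assumes "c \<in> {0..1}" "alpha \<le> 1" "\<bar>A - c\<bar> \<le> D"
  shows "\<bar>clip01 ((1 - alpha) * A + alpha * c + e) - c\<bar> \<le> (1 - alpha) * D + \<bar>e\<bar>"
proof -
  have "\<bar>(1 - alpha) * (A - c)\<bar> \<le> (1 - alpha) * D"
    using assms(2,3) by (simp add: abs_mult mult_left_mono)
  moreover have "(1 - alpha) * A + alpha * c + e - c = (1 - alpha) * (A - c) + e"
    by (simp add: algebra_simps)
  ultimately show ?thesis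
    using clip01_dist_le[OF assms(1), of "(1 - alpha) * A + alpha * c + e"] by linarith
qed

lemma hk_neighbors_self: "i \<in> V \<Longrightarrow> 0 \<le> eps \<Longrightarrow> i \<in> hk_neighbors V eps x i"
  by (simp add: hk_neighbors_def)

lemma hk_avg_bounds:
  assumes "finite V" "i \<in> V" "0 \<le> eps"
    and lo: "\<And>j. j \<in> hk_neighbors V eps x i \<Longrightarrow> a \<le> x j"
    and hi: "\<And>j. j \<in> hk_neighbors V eps x i \<Longrightarrow> x j \<le> b"
  shows "a \<le> hk_avg V eps x i" "hk_avg V eps x i \<le> b"
proof -
  let ?N = "hk_neighbors V eps x i"
  have "finite ?N" "?N \<noteq> {}"
    using assms(1) hk_neighbors_self[OF assms(2,3)] by (auto simp: hk_neighbors_def)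
  then have card_pos: "real (card ?N) > 0" by (simp add: card_gt_0_iff)
  have "real (card ?N) * a \<le> (\<Sum>j\<in>?N. x j)" "(\<Sum>j\<in>?N. x j) \<le> real (card ?N) * b"
    using sum_mono[of ?N "\<lambda>_. a" x] sum_mono[of ?N x "\<lambda>_. b"] lo hi by simp_all
  then show "a \<le> hk_avg V eps x i" "hk_avg V eps x i \<le> b"
    unfolding hk_avg_def using card_pos by (simp_all add: divide_simps mult.commute)
qed

lemma hk_avg_near_self:
  assumes "finite V" "i \<in> V" "0 \<le> eps"
  shows "x i - eps \<le> hk_avg V eps x i" "hk_avg V eps x i \<le> x i + eps"
  by (rule hk_avg_bounds[OF assms, where a = "x i - eps" and b = "x i + eps"];
      auto simp: hk_neighbors_def abs_le_iff)+

lemma hk_avg_cong: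
  assumes "\<And>j. j \<in> V \<Longrightarrow> x j = y j" "i \<in> V"
  shows "hk_avg V eps x i = hk_avg V eps y i"
proof -
  have "hk_neighbors V eps x i = hk_neighbors V eps y i"
    using assms by (auto simp: hk_neighbors_def)
  then show ?thesis
    unfolding hk_avg_def using assms(1) by (simp add: hk_neighbors_def)
qed

lemma hk_avg_reflect:
  assumes "finite V" "i \<in> V" "0 \<le> eps"
  shows "hk_avg V eps (\<lambda>j. 1 - x j) i = 1 - hk_avg V eps x i"
proof -
  let ?N = "hk_neighbors V eps x i"
  have same_nbs: "hk_neighbors V eps (\<lambda>j. 1 - x j) i = ?N"
    by (auto simp: hk_neighbors_def abs_minus_commute)
  have "finite ?N" "?N \<noteq> {}"
    using assms(1) hk_neighbors_self[OF assms(2,3)] by (auto simp: hk_neighbors_def)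
  then have "real (card ?N) \<noteq> 0" by simp
  then show ?thesis
    unfolding hk_avg_def same_nbs by (simp add: sum_subtractf divide_simps)
qed

lemma hk_traj_in_01:
  assumes "\<And>i. i \<in> V \<Longrightarrow> x0 i \<in> {0..1}" "i \<in> V"
  shows "hk_traj V J eps alpha x0 xi t i \<in> {0..1}"
  using assms clip01_in_01 by (cases t) simp_all

text \<open>The dynamics commutes with the reflection \<open>x \<mapsto> 1 - x\<close> of opinions, prejudices and noise;
  this turns lower bounds into upper bounds.\<close>
lemma hk_traj_reflect:
  assumes "finite V" "0 \<le> eps" "i \<in> V"
  shows "hk_traj V (\<lambda>i. 1 - J i) eps alpha (\<lambda>i. 1 - x0 i) (\<lambda>i t. - xi i t) t i
       = 1 - hk_traj V J eps alpha x0 xi t i"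
  using assms(3)
proof (induction t arbitrary: i)
  case (Suc t)
  let ?x = "hk_traj V J eps alpha x0 xi t"
  have "hk_avg V eps (hk_traj V (\<lambda>i. 1 - J i) eps alpha (\<lambda>i. 1 - x0 i) (\<lambda>i t. - xi i t) t) i
      = hk_avg V eps (\<lambda>j. 1 - ?x j) i"
    using Suc by (intro hk_avg_cong) auto
  also have "\<dots> = 1 - hk_avg V eps ?x i"
    using hk_avg_reflect[OF assms(1) Suc.prems assms(2)] .
  finally have avg: "hk_avg V eps (hk_traj V (\<lambda>i. 1 - J i) eps alpha (\<lambda>i. 1 - x0 i)
      (\<lambda>i t. - xi i t) t) i = 1 - hk_avg V eps ?x i" .
  have arg: "(1 - alpha) * (1 - hk_avg V eps ?x i) + alpha * (1 - J i) + - xi i (Suc t)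
      = 1 - ((1 - alpha) * hk_avg V eps ?x i + alpha * J i + xi i (Suc t))"
    by (simp add: algebra_simps)
  show ?case
    by (simp only: hk_traj.simps(2) avg arg clip01_reflect)
qed simp

lemma hk_traj_ge_prejudice:
  assumes "finite V" "i \<in> V" "0 \<le> eps" "0 < alpha" "alpha \<le> 1" "0 \<le> delta"
    and init: "\<And>j. j \<in> V \<Longrightarrow> x0 j \<in> {0..1}"
    and noise: "\<And>t. \<bar>xi i (Suc t)\<bar> \<le> delta"
    and prej: "J i \<in> {0..1}"
  shows "J i - ((1 - alpha) * eps + delta) / alpha - (1 - alpha) ^ t
       \<le> hk_traj V J eps alpha x0 xi t i"
proof -
  define c where "c = J i - ((1 - alpha) * eps + delta) / alpha"
  have c_le: "c \<le> J i" unfolding c_def using assms(3-6) by simp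
  have alpha_c: "alpha * c = alpha * J i - (1 - alpha) * eps - delta"
    unfolding c_def using assms(4) by (simp add: field_simps)
  show ?thesis
    unfolding c_def[symmetric]
  proof (induction t)
    case 0
    then show ?case using init[OF assms(2)] prej c_le by simp
  next
    case (Suc t)
    let ?x = "hk_traj V J eps alpha x0 xi t"
    have x_01: "?x i \<in> {0..1}" using hk_traj_in_01[OF init assms(2)] .
    have "(1 - alpha) * (?x i - eps) \<le> (1 - alpha) * hk_avg V eps ?x i"
      using hk_avg_near_self(1)[OF assms(1-3)] assms(5) by (intro mult_left_mono) auto
    then have below: "(1 - alpha) * ?x i + alpha * c
        \<le> (1 - alpha) * hk_avg V eps ?x i + alpha * J i + xi i (Suc t)"
      using alpha_c noise[of t] by (simp add: algebra_simps abs_le_iff)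
    have "(1 - alpha) * ?x i \<le> 1 - alpha" "alpha * c \<le> alpha"
      using x_01 c_le prej assms(4,5) by (simp_all add: mult_left_le)
    then have "(1 - alpha) * ?x i + alpha * c \<le> hk_traj V J eps alpha x0 xi (Suc t) i"
      using clip01_ge[OF _ below] by simp
    moreover have "(1 - alpha) * (c - (1 - alpha) ^ t) \<le> (1 - alpha) * ?x i"
      using Suc.IH assms(5) by (intro mult_left_mono) auto
    ultimately show ?case by (simp add: algebra_simps)
  qed
qed

lemma hk_traj_le_prejudice:
  assumes "finite V" "i \<in> V" "0 \<le> eps" "0 < alpha" "alpha \<le> 1" "0 \<le> delta"
    and init: "\<And>j. j \<in> V \<Longrightarrow> x0 j \<in> {0..1}"
    and noise: "\<And>t. \<bar>xi i (Suc t)\<bar> \<le> delta"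
    and prej: "J i \<in> {0..1}"
  shows "hk_traj V J eps alpha x0 xi t i
       \<le> J i + ((1 - alpha) * eps + delta) / alpha + (1 - alpha) ^ t"
  using hk_traj_ge_prejudice[OF assms(1-6),
      of "\<lambda>i. 1 - x0 i" "\<lambda>i t. - xi i t" "\<lambda>i. 1 - J i" t]
    hk_traj_reflect[OF assms(1,3,2), of J alpha x0 xi t] init noise prej
  by simp

lemma hk_neighbors_within_group:
  assumes "V \<subseteq> A \<union> B"
    and apart: "\<And>i j. i \<in> A \<Longrightarrow> j \<in> B \<Longrightarrow> x j + eps < x i"
  shows "i \<in> A \<Longrightarrow> hk_neighbors V eps x i \<subseteq> A"
    and "i \<in> B \<Longrightarrow> hk_neighbors V eps x i \<subseteq> B"
proof -
  show "hk_neighbors V eps x i \<subseteq> A" if "i \<in> A"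
  proof
    fix j assume j: "j \<in> hk_neighbors V eps x i"
    show "j \<in> A"
    proof (rule ccontr)
      assume "j \<notin> A"
      with j assms(1) have "j \<in> B" by (auto simp: hk_neighbors_def)
      with j show False
        using apart[OF that, of j] by (simp add: hk_neighbors_def abs_diff_le_iff)
    qed
  qed
  show "hk_neighbors V eps x i \<subseteq> B" if "i \<in> B"
  proof
    fix j assume j: "j \<in> hk_neighbors V eps x i"
    show "j \<in> B"
    proof (rule ccontr)
      assume "j \<notin> B"
      with j assms(1) have "j \<in> A" by (auto simp: hk_neighbors_def)
      with j show False
        using apart[OF _ that, of j] by (simp add: hk_neighbors_def abs_diff_le_iff)
    qed
  qed
qed

lemma hk_traj_closed_group_near_prejudice:
  assumes "finite V" "S \<subseteq> V" "0 \<le> eps" "0 < alpha" "alpha \<le> 1" "0 \<le> delta"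
    and init: "\<And>j. j \<in> V \<Longrightarrow> x0 j \<in> {0..1}"
    and noise: "\<And>i t. i \<in> S \<Longrightarrow> \<bar>xi i (Suc t)\<bar> \<le> delta"
    and prej: "\<And>i. i \<in> S \<Longrightarrow> J i = c" "c \<in> {0..1}"
    and closed: "\<And>t i. T \<le> t \<Longrightarrow> i \<in> S
      \<Longrightarrow> hk_neighbors V eps (hk_traj V J eps alpha x0 xi t) i \<subseteq> S"
  shows "\<forall>i\<in>S. \<bar>hk_traj V J eps alpha x0 xi (T + k) i - c\<bar>
      \<le> (1 - alpha) ^ k + delta / alpha"
proof (induction k)
  case 0
  have "0 \<le> delta / alpha" using assms(4,6) by simp
  moreover have "\<bar>hk_traj V J eps alpha x0 xi T i - c\<bar> \<le> 1" if "i \<in> S" for i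
    using hk_traj_in_01[of V x0 i J eps alpha xi T, OF init subsetD[OF \<open>S \<subseteq> V\<close> that]] prej(2)
    by (auto simp: abs_diff_le_iff)
  ultimately show ?case by fastforce
next
  case (Suc k)
  let ?x = "hk_traj V J eps alpha x0 xi (T + k)"
  let ?D = "(1 - alpha) ^ k + delta / alpha"
  show ?case
  proof
    fix i assume "i \<in> S"
    then have "i \<in> V" using \<open>S \<subseteq> V\<close> by blast
    have nbs: "c - ?D \<le> ?x j \<and> ?x j \<le> c + ?D" if "j \<in> hk_neighbors V eps ?x i" for j
    proof -
      have "j \<in> S" using closed[of "T + k" i] \<open>i \<in> S\<close> that by auto
      then show ?thesis using Suc.IH unfolding abs_diff_le_iff by blast
    qed
    have avg: "\<bar>hk_avg V eps ?x i - c\<bar> \<le> ?D"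
      using hk_avg_bounds[OF assms(1) \<open>i \<in> V\<close> assms(3), where a = "c - ?D" and b = "c + ?D"]
        nbs
      unfolding abs_diff_le_iff by blast
    let ?e = "xi i (Suc (T + k))"
    have "hk_traj V J eps alpha x0 xi (T + Suc k) i
        = clip01 ((1 - alpha) * hk_avg V eps ?x i + alpha * c + ?e)"
      using prej(1)[OF \<open>i \<in> S\<close>] by simp
    then have "\<bar>hk_traj V J eps alpha x0 xi (T + Suc k) i - c\<bar> \<le> (1 - alpha) * ?D + delta"
      using clip01_update_dist_le[OF prej(2) assms(5) avg, of ?e]
        noise[OF \<open>i \<in> S\<close>, of "T + k"] by linarith
    also have "\<dots> = (1 - alpha) ^ Suc k + ((1 - alpha) * (delta / alpha) + delta)"
      by (simp add: algebra_simps)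
    also have "(1 - alpha) * (delta / alpha) + delta = delta / alpha"
      using assms(4) by (simp add: field_simps)
    finally show "\<bar>hk_traj V J eps alpha x0 xi (T + Suc k) i - c\<bar>
        \<le> (1 - alpha) ^ Suc k + delta / alpha" .
  qed
qed

lemma limsup_SUP_le_of_geometric_bound:
  fixes f :: "nat \<Rightarrow> 'b \<Rightarrow> real" and r :: real
  assumes "\<bar>r\<bar> < 1"
    and bound: "\<And>t i. T \<le> t \<Longrightarrow> i \<in> S \<Longrightarrow> \<bar>f t i\<bar> \<le> r ^ (t - T) + D"
  shows "limsup (\<lambda>t. SUP i\<in>S. ereal \<bar>f t i\<bar>) \<le> ereal D"
proof -
  let ?B = "\<lambda>t. ereal (r ^ (t - T) + D)"
  have "(\<lambda>t. r ^ (t - T)) \<longlonglongrightarrow> 0"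
    using filterlim_compose[OF LIMSEQ_power_zero[of r] filterlim_minus_const_nat_at_top[of T]] assms(1)
    by simp
  then have "?B \<longlonglongrightarrow> ereal D"
    using tendsto_add[of _ 0 _ "\<lambda>_. D" D] by simp
  then have "limsup ?B = ereal D"
    by (intro lim_imp_Limsup) simp_all
  moreover have "eventually (\<lambda>t. (SUP i\<in>S. ereal \<bar>f t i\<bar>) \<le> ?B t) sequentially"
    unfolding eventually_sequentially using bound by (intro exI[of _ T] allI impI SUP_least) simp
  then have "limsup (\<lambda>t. SUP i\<in>S. ereal \<bar>f t i\<bar>) \<le> limsup ?B"
    by (rule Limsup_mono)
  ultimately show ?thesis by simp
qed

lemma hk_traj_groups_eventually_apart:
  fixes J :: "nat \<Rightarrow> real"
  assumes "finite V" "S1 \<union> S2 = V" "0 \<le> eps" "0 < alpha" "alpha \<le> 1" "0 \<le> delta"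
    and init: "\<And>i. i \<in> V \<Longrightarrow> x0 i \<in> {0..1}"
    and noise: "\<And>i t. i \<in> V \<Longrightarrow> \<bar>xi i (Suc t)\<bar> \<le> delta"
    and prej: "\<And>i. i \<in> S1 \<Longrightarrow> J i = J1" "\<And>i. i \<in> S2 \<Longrightarrow> J i = J2"
      "J1 \<in> {0..1}" "J2 \<in> {0..1}"
    and gap: "J1 - J2 > eps + 2 * (((1 - alpha) * eps + delta) / alpha)"
  obtains T where "\<And>t i j. T \<le> t \<Longrightarrow> i \<in> S1 \<Longrightarrow> j \<in> S2
    \<Longrightarrow> hk_traj V J eps alpha x0 xi t j + eps < hk_traj V J eps alpha x0 xi t i"
proof -
  let ?x = "hk_traj V J eps alpha x0 xi"
  define b where "b = ((1 - alpha) * eps + delta) / alpha"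
  have S1: "S1 \<subseteq> V" and S2: "S2 \<subseteq> V" using assms(2) by auto
  have lower: "J1 - b - (1 - alpha) ^ t \<le> ?x t i" if "i \<in> S1" for t i
    using hk_traj_ge_prejudice[OF assms(1) subsetD[OF S1 that] assms(3-6) init,
        where xi = xi and J = J and t = t]
      noise[OF subsetD[OF S1 that]] prej(1)[OF that] prej(3) unfolding b_def by simp
  have upper: "?x t j \<le> J2 + b + (1 - alpha) ^ t" if "j \<in> S2" for t j
    using hk_traj_le_prejudice[OF assms(1) subsetD[OF S2 that] assms(3-6) init,
        where xi = xi and J = J and t = t]
      noise[OF subsetD[OF S2 that]] prej(2)[OF that] prej(4) unfolding b_def by simp
  define g where "g = J1 - J2 - eps - 2 * b"
  have "0 < g / 2" using gap unfolding g_def b_def by simp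
  moreover have "(\<lambda>t. (1 - alpha) ^ t) \<longlonglongrightarrow> 0"
    using assms(4,5) by (intro LIMSEQ_power_zero) simp
  ultimately have "eventually (\<lambda>t. (1 - alpha) ^ t < g / 2) sequentially"
    by (intro order_tendstoD(2))
  then obtain T where T: "\<And>t. T \<le> t \<Longrightarrow> (1 - alpha) ^ t < g / 2"
    unfolding eventually_sequentially by blast
  show thesis
  proof
    show "?x t j + eps < ?x t i" if "T \<le> t" "i \<in> S1" "j \<in> S2" for t i j
      using lower[OF that(2), of t] upper[OF that(3), of t] T[OF that(1)] g_def by linarith
  qed
qed

lemma hk_traj_limsup_dist_prejudice_le:
  fixes J :: "nat \<Rightarrow> real"
  assumes "finite V" "S1 \<union> S2 = V" "0 \<le> eps" "0 < alpha" "alpha \<le> 1" "0 \<le> delta"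
    and init: "\<And>i. i \<in> V \<Longrightarrow> x0 i \<in> {0..1}"
    and noise: "\<And>i t. i \<in> V \<Longrightarrow> \<bar>xi i (Suc t)\<bar> \<le> delta"
    and prej: "\<And>i. i \<in> S1 \<Longrightarrow> J i = J1" "\<And>i. i \<in> S2 \<Longrightarrow> J i = J2"
      "J1 \<in> {0..1}" "J2 \<in> {0..1}"
    and gap: "J1 - J2 > eps + 2 * (((1 - alpha) * eps + delta) / alpha)"
  shows "limsup (\<lambda>t. SUP i\<in>S1. ereal \<bar>hk_traj V J eps alpha x0 xi t i - J1\<bar>)
      \<le> ereal (delta / alpha)"
    and "limsup (\<lambda>t. SUP i\<in>S2. ereal \<bar>hk_traj V J eps alpha x0 xi t i - J2\<bar>)
      \<le> ereal (delta / alpha)"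
proof -
  let ?x = "hk_traj V J eps alpha x0 xi"
  obtain T where apart: "\<And>t i j. T \<le> t \<Longrightarrow> i \<in> S1 \<Longrightarrow> j \<in> S2 \<Longrightarrow> ?x t j + eps < ?x t i"
    using hk_traj_groups_eventually_apart[where J = J and xi = xi and ?x0.0 = x0, OF assms] by blast
  have S1: "S1 \<subseteq> V" and S2: "S2 \<subseteq> V" using assms(2) by auto
  have contraction: "\<bar>1 - alpha\<bar> < 1" using assms(4,5) by simp
  have closed1: "hk_neighbors V eps (?x t) i \<subseteq> S1" if "T \<le> t" "i \<in> S1" for t i
    by (rule hk_neighbors_within_group(1)[where x = "?x t" and A = S1 and B = S2,
          OF _ apart[OF that(1)] that(2)]) (use assms(2) in blast)
  have closed2: "hk_neighbors V eps (?x t) i \<subseteq> S2" if "T \<le> t" "i \<in> S2" for t i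
    by (rule hk_neighbors_within_group(2)[where x = "?x t" and A = S1 and B = S2,
          OF _ apart[OF that(1)] that(2)]) (use assms(2) in blast)
  have "\<forall>i\<in>S1. \<bar>?x (T + k) i - J1\<bar> \<le> (1 - alpha) ^ k + delta / alpha" for k
    using S1 noise by (intro hk_traj_closed_group_near_prejudice[OF assms(1) S1 assms(3-6) init _
          prej(1) prej(3) closed1]) auto
  then show "limsup (\<lambda>t. SUP i\<in>S1. ereal \<bar>?x t i - J1\<bar>) \<le> ereal (delta / alpha)"
    by (intro limsup_SUP_le_of_geometric_bound[OF contraction, of T]) (metis le_add_diff_inverse)
  have "\<forall>i\<in>S2. \<bar>?x (T + k) i - J2\<bar> \<le> (1 - alpha) ^ k + delta / alpha" for k
    using S2 noise by (intro hk_traj_closed_group_near_prejudice[OF assms(1) S2 assms(3-6) init _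
          prej(2) prej(4) closed2]) auto
  then show "limsup (\<lambda>t. SUP i\<in>S2. ereal \<bar>?x t i - J2\<bar>) \<le> ereal (delta / alpha)"
    by (intro limsup_SUP_le_of_geometric_bound[OF contraction, of T]) (metis le_add_diff_inverse)
qed

lemma AE_abs_le_of_distr_eq:
  fixes X Y :: "'a \<Rightarrow> real"
  assumes "X \<in> borel_measurable M" "Y \<in> borel_measurable M"
    and "distr M borel X = distr M borel Y"
    and "AE \<omega> in M. \<bar>Y \<omega>\<bar> \<le> delta"
  shows "AE \<omega> in M. \<bar>X \<omega>\<bar> \<le> delta"
proof -
  have "AE y in distr M borel Y. \<bar>y\<bar> \<le> delta"
    by (subst AE_distr_iff[OF assms(2)]) (use assms(4) in simp_all)
  then have "AE y in distr M borel X. \<bar>y\<bar> \<le> delta"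
    by (simp only: assms(3))
  then show ?thesis
    by (subst (asm) AE_distr_iff[OF assms(1)]) simp_all
qed

theorem theorem3:
  fixes M :: "'a measure" and xi :: "nat \<Rightarrow> nat \<Rightarrow> 'a \<Rightarrow> real"
    and n :: nat and S1 S2 :: "nat set" and J1 J2 eps alpha delta :: real
    and x0 :: "nat \<Rightarrow> real"
  assumes P: "prob_space M"
    and n: "n \<ge> 1"
    and part: "S1 \<union> S2 = {1..n}" "S1 \<inter> S2 = {}"
    and J: "J1 \<in> {0..1}" "J2 \<in> {0..1}"
    and eps: "0 < eps" "eps < 1"
    and alpha: "0 < alpha" "alpha \<le> 1"
    and meas: "\<And>i t. i \<in> {1..n} \<Longrightarrow> t \<ge> 1 \<Longrightarrow> xi i t \<in> borel_measurable M"
    and indep: "prob_space.indep_vars M (\<lambda>_. borel) (\<lambda>(i, t). xi i t) ({1..n} \<times> {1..})"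
    and ident: "\<And>i t. i \<in> {1..n} \<Longrightarrow> t \<ge> 1 \<Longrightarrow> distr M borel (xi i t) = distr M borel (xi 1 1)"
    and integ: "integrable M (xi 1 1)"
    and mean0: "prob_space.expectation M (xi 1 1) = 0"
    and var_pos: "prob_space.expectation M (\<lambda>\<omega>. (xi 1 1 \<omega>)\<^sup>2) > 0"
    and delta: "delta > 0"
    and bound: "AE \<omega> in M. \<bar>xi 1 1 \<omega>\<bar> \<le> delta"
    and gap: "J1 - J2 > eps + 2 * (((1 - alpha) * eps + delta) / alpha)"
    and init: "\<And>i. i \<in> {1..n} \<Longrightarrow> x0 i \<in> {0..1}"
  shows "AE \<omega> in M.
     limsup (\<lambda>t. SUP i\<in>S1. ereal \<bar>hk_traj {1..n} (\<lambda>i. if i \<in> S1 then J1 else J2) eps alpha x0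
                                     (\<lambda>i t. xi i t \<omega>) t i - J1\<bar>) \<le> ereal (delta / alpha)
   \<and> limsup (\<lambda>t. SUP i\<in>S2. ereal \<bar>hk_traj {1..n} (\<lambda>i. if i \<in> S1 then J1 else J2) eps alpha x0
                                     (\<lambda>i t. xi i t \<omega>) t i - J2\<bar>) \<le> ereal (delta / alpha)"
proof -
  have xi11: "xi 1 1 \<in> borel_measurable M" using meas n by simp
  have "AE \<omega> in M. i \<in> {1..n} \<longrightarrow> \<bar>xi i (Suc t) \<omega>\<bar> \<le> delta" for i t
  proof (cases "i \<in> {1..n}")
    case True
    have "xi i (Suc t) \<in> borel_measurable M" "distr M borel (xi i (Suc t)) = distr M borel (xi 1 1)"
      using meas[OF True] ident[OF True] by simp_all
    then have "AE \<omega> in M. \<bar>xi i (Suc t) \<omega>\<bar> \<le> delta"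
      using AE_abs_le_of_distr_eq[OF _ xi11 _ bound] by blast
    then show ?thesis by (rule AE_mp) simp
  qed (intro AE_I2, auto)
  then have noise_AE: "AE \<omega> in M. \<forall>i t. i \<in> {1..n} \<longrightarrow> \<bar>xi i (Suc t) \<omega>\<bar> \<le> delta"
    by (simp add: AE_all_countable)
  have prej: "\<And>i. i \<in> S1 \<Longrightarrow> (if i \<in> S1 then J1 else J2) = J1"
    "\<And>i. i \<in> S2 \<Longrightarrow> (if i \<in> S1 then J1 else J2) = J2"
    using part(2) by auto
  from noise_AE show ?thesis
    by (rule eventually_mono) (intro conjI hk_traj_limsup_dist_prejudice_le[
        where J = "\<lambda>i. if i \<in> S1 then J1 else J2" and ?x0.0 = x0, OF finite_atLeastAtMost part(1)
        less_imp_le[OF eps(1)] alpha less_imp_le[OF delta] init _ prej J gap]; blast)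
qed

end
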